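(* Let $r>2$, $\alpha=2^r-1$, $\beta=2^{r-1}(2^r-1)$, let $\mathcal{C}\subseteq\mathbb{Z}_2^\alpha\times\mathbb{Z}_4^\beta$ be a $\mathbb{Z}_2\mathbb{Z}_4$-additive 1-perfect code and $D=\mathcal{C}^\perp$, and suppose $D$ is $\mathbb{Z}_2\mathbb{Z}_4$-cyclic. Let $\mathbf{z}=(x_1,\dots,x_\alpha\mid y^{(1)},\dots,y^{(2^{r-1})})\in D$ be a codeword of order 4, where each $y^{(k)}\in\mathbb{Z}_4^\alpha$ is the $k$th consecutive block of $\alpha$ quaternary coordinates, and put $\eta_k(y)=|\{\ell:1\le\ell\le\alpha,\ y^{(k)}_\ell=2\}|$. Then $\eta_1(y),\dots,\eta_{2^{r-1}}(y)$ all have the same parity.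
   Context: A $\mathbb{Z}_2\mathbb{Z}_4$-additive code is an additive subgroup of $\mathbb{Z}_2^\alpha\times\mathbb{Z}_4^\beta$; vectors are $(u\mid u')$ with $u\in\mathbb{Z}_2^\alpha$, $u'\in\mathbb{Z}_4^\beta$. A codeword $\mathbf{z}$ has order 4 if $2\mathbf{z}\ne 0$. The Gray map $\phi:\mathbb{Z}_4\to\mathbb{Z}_2^2$ is $0\mapsto(0,0),1\mapsto(0,1),2\mapsto(1,1),3\mapsto(1,0)$, $\Phi(u\mid u')=(u\mid\phi(u'_1),\dots,\phi(u'_\beta))$. A binary code $C\subseteq\mathbb{Z}_2^n$ is 1-perfect if the Hamming balls of radius 1 around its codewords partition $\mathbb{Z}_2^n$; a $\mathbb{Z}_2\mathbb{Z}_4$-additive code is 1-perfect if its Gray image is. The dual is $\mathcal{C}^\perp=\{\mathbf{v}:\mathbf{u}\cdot\mathbf{v}=0\ \forall\mathbf{u}\in\mathcal{C}\}$ with $\mathbf{u}\cdot\mathbf{v}=2\sum_{i=1}^\alpha u_iv_i+\sum_{j=1}^\beta u'_jv'_j\in\mathbb{Z}_4$. With $\sigma(v_1,\dots,v_m)=(v_m,v_1,\dots,v_{m-1})$ and $\sigma(u\mid u')=(\sigma(u)\mid\sigma(u'))$, a code is $\mathbb{Z}_2\mathbb{Z}_4$-cyclic if closed under $\sigma$. *)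

theory Defs
  imports Main
begin

text \<open>Z2Z4 vectors (u | u') are pairs of integer lists; entries of u lie in {0,1}
  (representing Z2), entries of u' lie in {0,1,2,3} (representing Z4).\<close>

type_synonym z2z4vec = "int list \<times> int list"

definition z2z4_space :: "nat \<Rightarrow> nat \<Rightarrow> z2z4vec set" where
  "z2z4_space \<alpha> \<beta> = {(u, u'). length u = \<alpha> \<and> length u' = \<beta> \<and>
      set u \<subseteq> {0, 1} \<and> set u' \<subseteq> {0, 1, 2, 3}}"

definition z2z4_zero :: "nat \<Rightarrow> nat \<Rightarrow> z2z4vec" where
  "z2z4_zero \<alpha> \<beta> = (replicate \<alpha> 0, replicate \<beta> 0)"

definition z2z4_add :: "z2z4vec \<Rightarrow> z2z4vec \<Rightarrow> z2z4vec" where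
  "z2z4_add x y = (map2 (\<lambda>a b. (a + b) mod 2) (fst x) (fst y),
                   map2 (\<lambda>a b. (a + b) mod 4) (snd x) (snd y))"

definition z2z4_neg :: "z2z4vec \<Rightarrow> z2z4vec" where
  "z2z4_neg x = (map (\<lambda>a. (- a) mod 2) (fst x), map (\<lambda>a. (- a) mod 4) (snd x))"

definition z2z4_additive :: "nat \<Rightarrow> nat \<Rightarrow> z2z4vec set \<Rightarrow> bool" where
  "z2z4_additive \<alpha> \<beta> C \<longleftrightarrow> C \<subseteq> z2z4_space \<alpha> \<beta> \<and> z2z4_zero \<alpha> \<beta> \<in> C \<and>
     (\<forall>x\<in>C. \<forall>y\<in>C. z2z4_add x y \<in> C) \<and> (\<forall>x\<in>C. z2z4_neg x \<in> C)"

definition z2z4_inner :: "z2z4vec \<Rightarrow> z2z4vec \<Rightarrow> int" where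
  "z2z4_inner x y = (2 * (\<Sum>i<length (fst x). fst x ! i * fst y ! i)
                     + (\<Sum>j<length (snd x). snd x ! j * snd y ! j)) mod 4"

definition z2z4_dual :: "nat \<Rightarrow> nat \<Rightarrow> z2z4vec set \<Rightarrow> z2z4vec set" where
  "z2z4_dual \<alpha> \<beta> C = {v \<in> z2z4_space \<alpha> \<beta>. \<forall>u\<in>C. z2z4_inner u v = 0}"

definition gray :: "int \<Rightarrow> bool list" where
  "gray a = (if a = 0 then [False, False] else if a = 1 then [False, True]
             else if a = 2 then [True, True] else [True, False])"

definition Gray :: "z2z4vec \<Rightarrow> bool list" where
  "Gray x = map (\<lambda>a. a = 1) (fst x) @ concat (map gray (snd x))"

definition hamming :: "bool list \<Rightarrow> bool list \<Rightarrow> nat" where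
  "hamming x y = card {i. i < length x \<and> x ! i \<noteq> y ! i}"

definition perfect1 :: "nat \<Rightarrow> bool list set \<Rightarrow> bool" where
  "perfect1 n C \<longleftrightarrow> (\<forall>c\<in>C. length c = n) \<and>
     (\<forall>x. length x = n \<longrightarrow> (\<exists>!c. c \<in> C \<and> hamming x c \<le> 1))"

definition z2z4_perfect1 :: "nat \<Rightarrow> nat \<Rightarrow> z2z4vec set \<Rightarrow> bool" where
  "z2z4_perfect1 \<alpha> \<beta> C \<longleftrightarrow> perfect1 (\<alpha> + 2 * \<beta>) (Gray ` C)"

definition rshift :: "'a list \<Rightarrow> 'a list" where
  "rshift xs = (if xs = [] then [] else last xs # butlast xs)"

definition z2z4_sigma :: "z2z4vec \<Rightarrow> z2z4vec" where
  "z2z4_sigma x = (rshift (fst x), rshift (snd x))"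

definition z2z4_cyclic :: "z2z4vec set \<Rightarrow> bool" where
  "z2z4_cyclic C \<longleftrightarrow> (\<forall>x\<in>C. z2z4_sigma x \<in> C)"

definition z2z4_order4 :: "nat \<Rightarrow> nat \<Rightarrow> z2z4vec \<Rightarrow> bool" where
  "z2z4_order4 \<alpha> \<beta> z \<longleftrightarrow> z2z4_add z z \<noteq> z2z4_zero \<alpha> \<beta>"

text \<open>eta_k for 0-based block index k: number of entries equal to 2 in the k-th
  consecutive block of alpha quaternary coordinates.\<close>
definition eta :: "nat \<Rightarrow> z2z4vec \<Rightarrow> nat \<Rightarrow> nat" where
  "eta \<alpha> z k = card {l. l < \<alpha> \<and> snd z ! (k * \<alpha> + l) = 2}"

end

theory Submission
  imports Defs Complex_Main
begin

text \<open>Write the codewords of \<open>D\<close> as \<open>(x | y)\<close>. Since the dual of \<open>D\<close> is \<open>C\<close>, every codeword of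
  \<open>C\<close> is a relation satisfied by all of \<open>D\<close>. As \<open>C\<close> is 1-perfect, any two Gray positions lie
  in the Gray support of a codeword of weight three, and the shape of such a codeword is
  restricted because \<open>2 e\<^sub>j \<notin> C\<close>, i.e. some codeword of \<open>D\<close> has \<open>y\<^sub>j\<close> odd. This gives three
  kinds of relations: every quaternary coordinate \<open>j\<close> has a binary coordinate \<open>f\<close> with
  \<open>y\<^sub>j \<equiv> x\<^sub>f (mod 2)\<close>; the coordinates \<open>j\<close> and \<open>j + \<alpha>\<close> have a binary coordinate \<open>g\<close> with
  \<open>2 x\<^sub>g + 3 y\<^sub>j + 3 y\<^sub>j\<^sub>+\<^sub>\<alpha> \<equiv> 0 (mod 4)\<close>; and the binary coordinates carry a Steiner triple
  system, so a nonzero \<open>x\<close> has weight \<open>(\<alpha> + 1) / 2\<close>.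

  Applying the first two relations to the rotations of \<open>z\<close> by \<open>l\<close> and by \<open>\<alpha> + l\<close> (\<open>D\<close> is cyclic)
  shows that \<open>[y\<^sub>j\<^sub>+\<^sub>l = 2] + [y\<^sub>j\<^sub>+\<^sub>\<alpha>\<^sub>+\<^sub>l = 2] + [x\<^sub>f\<^sub>+\<^sub>l = 0 \<and> x\<^sub>g\<^sub>+\<^sub>l = 1]\<close> is even for every \<open>l\<close>
  (binary indices taken modulo \<open>\<alpha>\<close>). Summing over \<open>l\<close> with \<open>j = k \<alpha>\<close>, the parities of \<open>\<eta>\<^sub>k\<close> and
  \<open>\<eta>\<^sub>k\<^sub>+\<^sub>1\<close> differ by the number of \<open>l\<close> with \<open>x\<^sub>f\<^sub>+\<^sub>l = 0\<close> and \<open>x\<^sub>g\<^sub>+\<^sub>l = 1\<close>. That number is half the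
  binary weight of \<open>z\<close> plus a rotation of \<open>z\<close>, hence \<open>0\<close> or \<open>(\<alpha> + 1) / 4\<close>, which is even since
  \<open>8\<close> divides \<open>2\<^sup>r\<close>.\<close>

section \<open>Vectors and the inner product\<close>

lemma z2z4_space_iff:
  "v \<in> z2z4_space a b \<longleftrightarrow> length (fst v) = a \<and> length (snd v) = b \<and>
     (\<forall>i<a. fst v ! i \<in> {0, 1}) \<and> (\<forall>j<b. snd v ! j \<in> {0, 1, 2, 3})"
  by (cases v) (auto simp: z2z4_space_def in_set_conv_nth subset_iff)

lemma z2z4_space_eqI:
  assumes "x \<in> z2z4_space a b" "y \<in> z2z4_space a b"
    and "\<And>i. i < a \<Longrightarrow> fst x ! i = fst y ! i" "\<And>j. j < b \<Longrightarrow> snd x ! j = snd y ! j"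
  shows "x = y"
  using assms by (cases x; cases y) (auto simp: z2z4_space_iff intro!: nth_equalityI)

lemma finite_z2z4_space: "finite (z2z4_space a b)"
proof (rule finite_subset)
  show "z2z4_space a b \<subseteq> {u. set u \<subseteq> {0, 1} \<and> length u = a} \<times> {u. set u \<subseteq> {0, 1, 2, 3} \<and> length u = b}"
    by (auto simp: z2z4_space_def)
  show "finite ({u::int list. set u \<subseteq> {0, 1} \<and> length u = a} \<times> {u. set u \<subseteq> {0, 1, 2, 3} \<and> length u = b})"
    by (intro finite_cartesian_product finite_lists_length_eq) auto
qed

lemma z2z4_add_in_space:
  assumes "x \<in> z2z4_space a b" "y \<in> z2z4_space a b"
  shows "z2z4_add x y \<in> z2z4_space a b"
    and "i < a \<Longrightarrow> fst (z2z4_add x y) ! i = (fst x ! i + fst y ! i) mod 2"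
    and "j < b \<Longrightarrow> snd (z2z4_add x y) ! j = (snd x ! j + snd y ! j) mod 4"
  using assms by (auto simp: z2z4_space_iff z2z4_add_def)

lemma z2z4_neg_in_space:
  assumes "x \<in> z2z4_space a b"
  shows "z2z4_neg x \<in> z2z4_space a b"
    and "i < a \<Longrightarrow> fst (z2z4_neg x) ! i = (- fst x ! i) mod 2"
    and "j < b \<Longrightarrow> snd (z2z4_neg x) ! j = (- snd x ! j) mod 4"
  using assms by (auto simp: z2z4_space_iff z2z4_neg_def)

lemma z2z4_zero_in_space: "z2z4_zero a b \<in> z2z4_space a b"
  by (auto simp: z2z4_space_iff z2z4_zero_def)

definition z2z4_vec :: "nat \<Rightarrow> nat \<Rightarrow> (nat \<Rightarrow> int) \<Rightarrow> (nat \<Rightarrow> int) \<Rightarrow> z2z4vec" where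
  "z2z4_vec a b F G = (map F [0..<a], map G [0..<b])"

lemma z2z4_vec_in_space:
  "(\<And>i. i < a \<Longrightarrow> F i \<in> {0, 1}) \<Longrightarrow> (\<And>j. j < b \<Longrightarrow> G j \<in> {0, 1, 2, 3}) \<Longrightarrow>
     z2z4_vec a b F G \<in> z2z4_space a b"
  by (auto simp: z2z4_space_iff z2z4_vec_def)

lemma sum_mod_cong:
  fixes f g :: "'a \<Rightarrow> int"
  assumes "\<And>i. i \<in> A \<Longrightarrow> f i mod m = g i mod m"
  shows "sum f A mod m = sum g A mod m"
proof -
  have "(\<Sum>i\<in>A. f i mod m) = (\<Sum>i\<in>A. g i mod m)" using assms by (rule sum.cong[OF refl])
  then show ?thesis by (metis mod_sum_eq)
qed

lemma double_mod4_cong: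
  fixes u v c :: int
  assumes "u mod 2 = v mod 2"
  shows "2 * (u * c) mod 4 = 2 * (v * c) mod 4"
proof -
  obtain t where t: "v = u + 2 * t" using mod_eqE[OF assms] .
  have "2 * (v * c) = 2 * (u * c) + 4 * (t * c)" unfolding t by (simp add: algebra_simps)
  then show ?thesis by (metis mod_mult_self2)
qed

lemma parity_of_relation:
  fixes x y :: int
  assumes "(2 * x + y * 2) mod 4 = 0"
  shows "y mod 2 = x mod 2"
  using assms by presburger

lemma even_of_relation:
  fixes x e y :: int
  assumes "(x + y * e) mod 4 = 0" "even x" "odd e"
  shows "even y"
proof -
  have "4 dvd x + y * e" using assms(1) by (simp add: mod_0_imp_dvd)
  then have "even (x + y * e)" by (rule dvd_trans[rotated]) simp
  then show ?thesis using assms(2,3) by simp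
qed

lemma block_pointwise_parity:
  fixes p q y y' :: int
  assumes "p \<in> {0, 1}" "q \<in> {0, 1}" "y \<in> {0, 1, 2, 3}" "y' \<in> {0, 1, 2, 3}"
    and "y mod 2 = p" "y' mod 2 = p" "(2 * q + 3 * y + 3 * y') mod 4 = 0"
  shows "even (of_bool (y = 2) + of_bool (y' = 2) + of_bool (p = 0 \<and> q = 1) :: nat)"
  using assms by auto

lemma z2z4_inner_range [simp]: "z2z4_inner x y mod 4 = z2z4_inner x y"
  by (simp add: z2z4_inner_def)

lemma z2z4_inner_eq:
  assumes "length (fst x) = a" "length (snd x) = b"
    and "\<And>i. i < a \<Longrightarrow> X i mod 2 = fst x ! i mod 2"
    and "\<And>j. j < b \<Longrightarrow> Y j mod 4 = snd x ! j mod 4"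
  shows "z2z4_inner x w = (2 * (\<Sum>i<a. X i * fst w ! i) + (\<Sum>j<b. Y j * snd w ! j)) mod 4"
proof -
  have bin: "(\<Sum>i<a. 2 * (fst x ! i * fst w ! i)) mod 4 = (\<Sum>i<a. 2 * (X i * fst w ! i)) mod 4"
  proof (rule sum_mod_cong)
    fix i assume "i \<in> {..<a}"
    then show "2 * (fst x ! i * fst w ! i) mod 4 = 2 * (X i * fst w ! i) mod 4"
      by (intro double_mod4_cong) (simp add: assms(3))
  qed
  have quat: "(\<Sum>j<b. snd x ! j * snd w ! j) mod 4 = (\<Sum>j<b. Y j * snd w ! j) mod 4"
  proof (rule sum_mod_cong)
    fix j assume "j \<in> {..<b}"
    then show "snd x ! j * snd w ! j mod 4 = Y j * snd w ! j mod 4"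
      by (metis assms(4) lessThan_iff mod_mult_left_eq)
  qed
  have "z2z4_inner x w = ((\<Sum>i<a. 2 * (fst x ! i * fst w ! i)) + (\<Sum>j<b. snd x ! j * snd w ! j)) mod 4"
    using assms(1,2) by (simp add: z2z4_inner_def sum_distrib_left)
  also have "\<dots> = ((\<Sum>i<a. 2 * (X i * fst w ! i)) + (\<Sum>j<b. Y j * snd w ! j)) mod 4"
    by (rule mod_add_cong[OF bin quat])
  finally show ?thesis by (simp add: sum_distrib_left)
qed

lemma z2z4_inner_commute:
  assumes "x \<in> z2z4_space a b" "y \<in> z2z4_space a b"
  shows "z2z4_inner x y = z2z4_inner y x"
  using assms by (simp add: z2z4_inner_def z2z4_space_iff mult.commute)

lemma z2z4_inner_add_left:
  assumes x: "x \<in> z2z4_space a b" and y: "y \<in> z2z4_space a b"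
  shows "z2z4_inner (z2z4_add x y) w = (z2z4_inner x w + z2z4_inner y w) mod 4"
proof -
  let ?A = "\<lambda>X Y. 2 * (\<Sum>i<a. X i * fst w ! i) + (\<Sum>j<b. Y j * snd w ! j)"
  have "z2z4_inner (z2z4_add x y) w = ?A (\<lambda>i. fst x ! i + fst y ! i) (\<lambda>j. snd x ! j + snd y ! j) mod 4"
    by (rule z2z4_inner_eq) (use z2z4_add_in_space[OF x y] in \<open>auto simp: z2z4_space_iff\<close>)
  also have "?A (\<lambda>i. fst x ! i + fst y ! i) (\<lambda>j. snd x ! j + snd y ! j)
      = ?A (nth (fst x)) (nth (snd x)) + ?A (nth (fst y)) (nth (snd y))"
    by (simp add: distrib_right sum.distrib algebra_simps)
  also have "(?A (nth (fst x)) (nth (snd x)) + ?A (nth (fst y)) (nth (snd y))) mod 4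
      = (z2z4_inner x w + z2z4_inner y w) mod 4"
    using x y by (simp add: z2z4_inner_def z2z4_space_iff sum_distrib_left mod_add_eq)
  finally show ?thesis .
qed

lemma z2z4_inner_neg_left:
  assumes x: "x \<in> z2z4_space a b"
  shows "z2z4_inner (z2z4_neg x) w = (- z2z4_inner x w) mod 4"
proof -
  have "z2z4_inner (z2z4_neg x) w
      = (2 * (\<Sum>i<a. (- fst x ! i) * fst w ! i) + (\<Sum>j<b. (- snd x ! j) * snd w ! j)) mod 4"
    by (rule z2z4_inner_eq) (use z2z4_neg_in_space[OF x] in \<open>auto simp: z2z4_space_iff\<close>)
  also have "\<dots> = (- z2z4_inner x w) mod 4"
    using x by (simp add: z2z4_inner_def z2z4_space_iff sum_negf mod_minus_eq)
  finally show ?thesis .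
qed

lemma z2z4_inner_zero_left [simp]: "z2z4_inner (z2z4_zero a b) w = 0"
  by (simp add: z2z4_inner_def z2z4_zero_def)

lemma z2z4_inner_vec:
  assumes "length (fst x) = a" "length (snd x) = b"
  shows "z2z4_inner x (z2z4_vec a b F G) = (2 * (\<Sum>i<a. fst x ! i * F i) + (\<Sum>j<b. snd x ! j * G j)) mod 4"
  using assms by (simp add: z2z4_inner_def z2z4_vec_def)

lemma z2z4_inner_add_right:
  assumes "c \<in> z2z4_space a b" "x \<in> z2z4_space a b" "y \<in> z2z4_space a b"
  shows "z2z4_inner c (z2z4_add x y) = (z2z4_inner c x + z2z4_inner c y) mod 4"
proof -
  have "z2z4_inner c (z2z4_add x y) = z2z4_inner (z2z4_add x y) c"
    using assms z2z4_add_in_space(1) z2z4_inner_commute by blast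
  also have "\<dots> = (z2z4_inner x c + z2z4_inner y c) mod 4"
    using assms(2,3) by (rule z2z4_inner_add_left)
  finally show ?thesis using assms z2z4_inner_commute by metis
qed

section \<open>Duality\<close>

lemma z2z4_additive_dual:
  assumes "S \<subseteq> z2z4_space a b"
  shows "z2z4_additive a b (z2z4_dual a b S)"
proof -
  have inner_right: "z2z4_inner u v = z2z4_inner v u" if "u \<in> S" "v \<in> z2z4_space a b" for u v
    using assms that z2z4_inner_commute by blast
  have "z2z4_add x y \<in> z2z4_dual a b S"
    if x: "x \<in> z2z4_dual a b S" and y: "y \<in> z2z4_dual a b S" for x y
  proof -
    have xs: "x \<in> z2z4_space a b" and ys: "y \<in> z2z4_space a b" using x y by (auto simp: z2z4_dual_def)
    have "z2z4_inner u (z2z4_add x y) = 0" if u: "u \<in> S" for u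
    proof -
      have "z2z4_inner u x = 0" "z2z4_inner u y = 0" using x y u by (auto simp: z2z4_dual_def)
      then show ?thesis
        using z2z4_inner_add_left[OF xs ys] inner_right[OF u z2z4_add_in_space(1)[OF xs ys]]
          inner_right[OF u xs] inner_right[OF u ys] by simp
    qed
    then show ?thesis using z2z4_add_in_space(1)[OF xs ys] by (simp add: z2z4_dual_def)
  qed
  moreover have "z2z4_neg x \<in> z2z4_dual a b S" if x: "x \<in> z2z4_dual a b S" for x
  proof -
    have xs: "x \<in> z2z4_space a b" using x by (simp add: z2z4_dual_def)
    have "z2z4_inner u (z2z4_neg x) = 0" if u: "u \<in> S" for u
    proof -
      have "z2z4_inner u x = 0" using x u by (auto simp: z2z4_dual_def)
      then show ?thesis
        using z2z4_inner_neg_left[OF xs] inner_right[OF u z2z4_neg_in_space(1)[OF xs]]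
          inner_right[OF u xs] by simp
    qed
    then show ?thesis using z2z4_neg_in_space(1)[OF xs] by (simp add: z2z4_dual_def)
  qed
  moreover have "z2z4_zero a b \<in> z2z4_dual a b S"
    unfolding z2z4_dual_def using inner_right[OF _ z2z4_zero_in_space] z2z4_zero_in_space by simp
  ultimately show ?thesis by (auto simp: z2z4_additive_def z2z4_dual_def)
qed

lemma z2z4_nonzero_witness:
  assumes x: "x \<in> z2z4_space a b" and "x \<noteq> z2z4_zero a b"
  obtains h where "h \<in> z2z4_space a b" "z2z4_inner x h \<noteq> 0"
proof -
  have len: "length (fst x) = a" "length (snd x) = b" using x by (auto simp: z2z4_space_iff)
  have "(\<exists>i<a. fst x ! i \<noteq> 0) \<or> (\<exists>j<b. snd x ! j \<noteq> 0)"
    using assms z2z4_space_eqI[OF x z2z4_zero_in_space] by (auto simp: z2z4_zero_def)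
  then show thesis
  proof (elim disjE exE conjE)
    fix i assume i: "i < a" "fst x ! i \<noteq> 0"
    let ?h = "z2z4_vec a b (\<lambda>k. if k = i then 1 else 0) (\<lambda>_. 0)"
    have "fst x ! i = 1" using i x by (auto simp: z2z4_space_iff)
    then have "z2z4_inner x ?h \<noteq> 0" using i by (simp add: z2z4_inner_vec[OF len] if_distrib cong: if_cong)
    moreover have "?h \<in> z2z4_space a b" by (rule z2z4_vec_in_space) auto
    ultimately show thesis using that by blast
  next
    fix j assume j: "j < b" "snd x ! j \<noteq> 0"
    let ?h = "z2z4_vec a b (\<lambda>_. 0) (\<lambda>k. if k = j then 1 else 0)"
    have "snd x ! j \<in> {1, 2, 3}" using j x by (auto simp: z2z4_space_iff)
    then have "z2z4_inner x ?h \<noteq> 0" using j by (auto simp: z2z4_inner_vec[OF len] if_distrib cong: if_cong)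
    moreover have "?h \<in> z2z4_space a b" by (rule z2z4_vec_in_space) auto
    ultimately show thesis using that by blast
  qed
qed

lemma z2z4_add_right_cancel:
  assumes x: "x \<in> z2z4_space a b" and y: "y \<in> z2z4_space a b" and h: "h \<in> z2z4_space a b"
    and eq: "z2z4_add x h = z2z4_add y h"
  shows "x = y"
proof (rule z2z4_space_eqI[OF x y])
  fix i assume i: "i < a"
  have "(fst x ! i + fst h ! i) mod 2 = (fst y ! i + fst h ! i) mod 2"
    using eq z2z4_add_in_space(2)[OF x h i] z2z4_add_in_space(2)[OF y h i] by simp
  then have "fst x ! i mod 2 = fst y ! i mod 2" by (metis mod_diff_cong add_diff_cancel_right')
  moreover have "fst x ! i \<in> {0, 1}" "fst y ! i \<in> {0, 1}" using x y i by (auto simp: z2z4_space_iff)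
  ultimately show "fst x ! i = fst y ! i" by auto
next
  fix j assume j: "j < b"
  have "(snd x ! j + snd h ! j) mod 4 = (snd y ! j + snd h ! j) mod 4"
    using eq z2z4_add_in_space(3)[OF x h j] z2z4_add_in_space(3)[OF y h j] by simp
  then have "snd x ! j mod 4 = snd y ! j mod 4" by (metis mod_diff_cong add_diff_cancel_right')
  moreover have "snd x ! j \<in> {0, 1, 2, 3}" "snd y ! j \<in> {0, 1, 2, 3}" using x y j by (auto simp: z2z4_space_iff)
  ultimately show "snd x ! j = snd y ! j" by auto
qed

lemma z2z4_translation_bij:
  assumes "S \<subseteq> z2z4_space a b" "h \<in> S" "\<And>x y. x \<in> S \<Longrightarrow> y \<in> S \<Longrightarrow> z2z4_add x y \<in> S"
  shows "bij_betw (\<lambda>x. z2z4_add x h) S S"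
proof (rule bij_betw_imageI)
  show inj: "inj_on (\<lambda>x. z2z4_add x h) S"
    using assms(1,2) z2z4_add_right_cancel by (meson inj_onI subsetD)
  have "finite S" using assms(1) finite_z2z4_space finite_subset by blast
  then show "(\<lambda>x. z2z4_add x h) ` S = S" using endo_inj_surj[OF _ _ inj] assms(2,3) by blast
qed

definition z4_char :: "int \<Rightarrow> complex" where
  "z4_char k = \<i> powi k"

lemma z4_char_add: "z4_char (x + y) = z4_char x * z4_char y"
  by (simp add: z4_char_def power_int_add)

lemma z4_char_mod: "z4_char (k mod 4) = z4_char k"
proof -
  have "k = 4 * (k div 4) + k mod 4" by simp
  then have "z4_char k = z4_char (4 * (k div 4)) * z4_char (k mod 4)" by (metis z4_char_add)
  moreover have "z4_char (4 * (k div 4)) = 1" by (simp add: z4_char_def power_int_mult)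
  ultimately show ?thesis by simp
qed

lemma z4_char_eq_1_iff: "z4_char k = 1 \<longleftrightarrow> k mod 4 = 0"
proof -
  have char_values: "z4_char 0 = 1" "z4_char 1 = \<i>" "z4_char 2 = -1" "z4_char 3 = -\<i>"
    by (simp_all add: z4_char_def power_int_def eval_nat_numeral)
  have "k mod 4 = 0 \<or> k mod 4 = 1 \<or> k mod 4 = 2 \<or> k mod 4 = 3" by auto
  then show ?thesis
    unfolding z4_char_mod[symmetric, of k] by (elim disjE) (simp_all add: char_values complex_eq_iff)
qed

lemma z4_char_inner_add_right:
  assumes "c \<in> z2z4_space a b" "x \<in> z2z4_space a b" "y \<in> z2z4_space a b"
  shows "z4_char (z2z4_inner c (z2z4_add x y)) = z4_char (z2z4_inner c x) * z4_char (z2z4_inner c y)"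
  by (simp only: z2z4_inner_add_right[OF assms] z4_char_mod z4_char_add)

lemma sum_eq_0_if_translation_scales:
  fixes g :: "'a \<Rightarrow> 'b::idom"
  assumes "bij_betw t H H" "\<And>h. h \<in> H \<Longrightarrow> g (t h) = g h * z" "z \<noteq> 1"
  shows "sum g H = 0"
proof -
  have "sum g H = (\<Sum>h\<in>H. g (t h))" by (rule sum.reindex_bij_betw[OF assms(1), symmetric])
  also have "\<dots> = sum g H * z" using assms(2) by (simp add: sum_distrib_right)
  finally have "sum g H * (1 - z) = 0" by (simp add: algebra_simps)
  then show ?thesis using assms(3) by simp
qed

lemma z4_char_sum_space:
  assumes c: "c \<in> z2z4_space a b" and "c \<noteq> z2z4_zero a b"
  shows "(\<Sum>w\<in>z2z4_space a b. z4_char (z2z4_inner c w)) = 0"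
proof -
  obtain h where h: "h \<in> z2z4_space a b" "z2z4_inner c h \<noteq> 0"
    using z2z4_nonzero_witness[OF assms] .
  show ?thesis
  proof (rule sum_eq_0_if_translation_scales)
    show "bij_betw (\<lambda>w. z2z4_add w h) (z2z4_space a b) (z2z4_space a b)"
      using h(1) z2z4_add_in_space(1) by (intro z2z4_translation_bij) auto
    show "z4_char (z2z4_inner c (z2z4_add w h)) = z4_char (z2z4_inner c w) * z4_char (z2z4_inner c h)"
      if "w \<in> z2z4_space a b" for w
      by (rule z4_char_inner_add_right[OF c that h(1)])
    show "z4_char (z2z4_inner c h) \<noteq> 1"
      using h(2) by (simp add: z4_char_eq_1_iff)
  qed
qed

lemma z4_char_sum_code:
  assumes C: "z2z4_additive a b C" and w: "w \<in> z2z4_space a b" "w \<notin> z2z4_dual a b C"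
  shows "(\<Sum>c\<in>C. z4_char (z2z4_inner c w)) = 0"
proof -
  have CG: "C \<subseteq> z2z4_space a b" using C by (simp add: z2z4_additive_def)
  obtain c0 where c0: "c0 \<in> C" "z2z4_inner c0 w \<noteq> 0" using w by (auto simp: z2z4_dual_def)
  have inner_w: "z2z4_inner c w = z2z4_inner w c" if "c \<in> C" for c
    using that CG w(1) z2z4_inner_commute by blast
  show ?thesis
  proof (rule sum_eq_0_if_translation_scales)
    show "bij_betw (\<lambda>c. z2z4_add c c0) C C"
      using C c0(1) by (intro z2z4_translation_bij) (auto simp: z2z4_additive_def)
    show "z4_char (z2z4_inner (z2z4_add c c0) w) = z4_char (z2z4_inner c w) * z4_char (z2z4_inner c0 w)"
      if c: "c \<in> C" for c
    proof -
      have "z2z4_add c c0 \<in> C" using C c c0(1) by (simp add: z2z4_additive_def)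
      then have "z4_char (z2z4_inner (z2z4_add c c0) w) = z4_char (z2z4_inner w (z2z4_add c c0))"
        by (simp only: inner_w)
      also have "\<dots> = z4_char (z2z4_inner w c) * z4_char (z2z4_inner w c0)"
        using CG c c0(1) by (intro z4_char_inner_add_right[OF w(1)]) auto
      finally show ?thesis using c c0(1) by (simp only: inner_w)
    qed
    show "z4_char (z2z4_inner c0 w) \<noteq> 1"
      using c0(2) by (simp add: z4_char_eq_1_iff)
  qed
qed

lemma card_z2z4_space_eq:
  assumes C: "z2z4_additive a b C"
  shows "card (z2z4_space a b) = card C * card (z2z4_dual a b C)"
proof -
  let ?G = "z2z4_space a b" and ?D = "z2z4_dual a b C" and ?z = "z2z4_zero a b"
  have CG: "C \<subseteq> ?G" and z: "?z \<in> C" using C by (auto simp: z2z4_additive_def)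
  have fin: "finite ?G" "finite C" using finite_z2z4_space finite_subset[OF CG] by auto
  have DG: "?D \<subseteq> ?G" by (auto simp: z2z4_dual_def)
  have "(\<Sum>c\<in>C. \<Sum>w\<in>?G. z4_char (z2z4_inner c w)) = (\<Sum>c\<in>C. if c = ?z then of_nat (card ?G) else 0)"
    using CG z4_char_sum_space by (intro sum.cong) (auto simp: z4_char_def)
  also have "\<dots> = of_nat (card ?G)" using z fin by (simp add: sum.delta)
  finally have rows: "(\<Sum>c\<in>C. \<Sum>w\<in>?G. z4_char (z2z4_inner c w)) = of_nat (card ?G)" .
  have "(\<Sum>w\<in>?G. \<Sum>c\<in>C. z4_char (z2z4_inner c w)) = (\<Sum>w\<in>?G. if w \<in> ?D then of_nat (card C) else 0)"
    using z4_char_sum_code[OF C] by (intro sum.cong) (auto simp: z2z4_dual_def z4_char_def)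
  also have "\<dots> = of_nat (card C) * of_nat (card ?D)"
    using DG fin by (simp add: sum.If_cases Int_absorb1 [OF DG] Int_commute)
  finally have cols: "(\<Sum>w\<in>?G. \<Sum>c\<in>C. z4_char (z2z4_inner c w)) = of_nat (card C * card ?D)" by simp
  have "(of_nat (card ?G) :: complex) = of_nat (card C * card ?D)"
    unfolding rows[symmetric] cols[symmetric] by (rule sum.swap)
  then show ?thesis using of_nat_eq_iff by blast
qed

lemma z2z4_dual_dual:
  assumes C: "z2z4_additive a b C"
  shows "z2z4_dual a b (z2z4_dual a b C) = C"
proof -
  let ?D = "z2z4_dual a b C"
  have CG: "C \<subseteq> z2z4_space a b" using C by (simp add: z2z4_additive_def)
  have D: "z2z4_additive a b ?D" by (rule z2z4_additive_dual[OF CG])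
  have "finite ?D" "z2z4_zero a b \<in> ?D"
    using D finite_z2z4_space finite_subset by (auto simp: z2z4_additive_def)
  then have "card ?D > 0" by (auto simp: card_gt_0_iff)
  then have card_eq: "card (z2z4_dual a b ?D) = card C"
    using card_z2z4_space_eq[OF C] card_z2z4_space_eq[OF D] by simp
  have sub: "C \<subseteq> z2z4_dual a b ?D"
  proof
    fix c assume c: "c \<in> C"
    have "z2z4_inner w c = 0" if w: "w \<in> ?D" for w
    proof -
      have "z2z4_inner c w = 0" "w \<in> z2z4_space a b" using w c by (auto simp: z2z4_dual_def)
      then show ?thesis using z2z4_inner_commute c CG by (metis subsetD)
    qed
    then show "c \<in> z2z4_dual a b ?D" using c CG by (auto simp: z2z4_dual_def)
  qed
  have "finite (z2z4_dual a b ?D)"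
    by (rule finite_subset[OF _ finite_z2z4_space]) (auto simp: z2z4_dual_def)
  then show ?thesis using card_subset_eq[OF _ sub] card_eq by simp
qed

section \<open>Binary 1-perfect codes\<close>

definition word_support :: "bool list \<Rightarrow> nat set" where
  "word_support x = {k. k < length x \<and> x ! k}"

definition indicator_word :: "nat \<Rightarrow> nat set \<Rightarrow> bool list" where
  "indicator_word n A = map (\<lambda>k. k \<in> A) [0..<n]"

lemma word_support_subset: "word_support x \<subseteq> {..<length x}"
  by (auto simp: word_support_def)

lemma indicator_word_support: "indicator_word (length x) (word_support x) = x"
  by (rule nth_equalityI) (auto simp: indicator_word_def word_support_def)

lemma word_support_replicate_False [simp]: "word_support (replicate n False) = {}"
  by (simp add: word_support_def)

lemma hamming_indicator_word:
  assumes "A \<subseteq> {..<n}" "B \<subseteq> {..<n}"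
  shows "hamming (indicator_word n A) (indicator_word n B) = card ((A - B) \<union> (B - A))"
proof -
  have "{i. i < length (indicator_word n A) \<and> indicator_word n A ! i \<noteq> indicator_word n B ! i}
      = (A - B) \<union> (B - A)"
    using assms by (auto simp: indicator_word_def)
  then show ?thesis by (simp add: hamming_def)
qed

lemma hamming_indicator_word_support:
  assumes "A \<subseteq> {..<length x}"
  shows "hamming (indicator_word (length x) A) x = card ((A - word_support x) \<union> (word_support x - A))"
  using hamming_indicator_word[OF assms word_support_subset] by (simp add: indicator_word_support)

context
  fixes n :: nat and W :: "bool list set"
  assumes perfect: "perfect1 n W" and zero: "replicate n False \<in> W"
begin

lemma perfect1_length: "x \<in> W \<Longrightarrow> length x = n"
  using perfect by (simp add: perfect1_def)

lemma perfect1_unique: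
  assumes "x \<in> W" "y \<in> W" "hamming (indicator_word n A) x \<le> 1" "hamming (indicator_word n A) y \<le> 1"
  shows "x = y"
proof -
  have "length (indicator_word n A) = n" by (simp add: indicator_word_def)
  then have "\<exists>!c. c \<in> W \<and> hamming (indicator_word n A) c \<le> 1"
    using perfect unfolding perfect1_def by blast
  then show ?thesis using assms by blast
qed

text \<open>A word of weight one, at distance at most one from both the zero word and a codeword
  of weight one or two, would lie in two balls.\<close>

lemma perfect1_min_weight:
  assumes x: "x \<in> W" and "word_support x \<noteq> {}"
  shows "3 \<le> card (word_support x)"
proof (rule ccontr)
  assume small: "\<not> 3 \<le> card (word_support x)"
  let ?T = "word_support x"
  obtain p where p: "p \<in> ?T" using assms(2) by blast
  have len: "length x = n" using perfect1_length[OF x] .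
  have T: "?T \<subseteq> {..<n}" "finite ?T" using word_support_subset[of x] len finite_subset by auto
  have pn: "p < n" using p T(1) by auto
  have "hamming (indicator_word n {p}) x \<le> 1"
    using hamming_indicator_word_support[of "{p}" x] p pn len small T(2) by simp
  moreover have "hamming (indicator_word n {p}) (replicate n False) \<le> 1"
    using hamming_indicator_word_support[of "{p}" "replicate n False"] pn by simp
  ultimately have "x = replicate n False" using perfect1_unique[OF x zero] by blast
  then show False using p by simp
qed

lemma perfect1_triple:
  assumes pq: "p < n" "q < n" "p \<noteq> q"
  obtains x s where "x \<in> W" "s < n" "s \<noteq> p" "s \<noteq> q" "word_support x = {p, q, s}"
proof -
  have P: "{p, q} \<subseteq> {..<n}" using pq by auto
  have "length (indicator_word n {p, q}) = n" by (simp add: indicator_word_def)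
  then obtain x where x: "x \<in> W" "hamming (indicator_word n {p, q}) x \<le> 1"
    using perfect unfolding perfect1_def by blast
  let ?T = "word_support x"
  have len: "length x = n" using perfect1_length[OF x(1)] .
  have T: "?T \<subseteq> {..<n}" "finite ?T" using word_support_subset[of x] len finite_subset by auto
  have dist: "card (({p, q} - ?T) \<union> (?T - {p, q})) \<le> 1"
    using x(2) hamming_indicator_word_support[of "{p, q}" x] P len by simp
  have "card ({p, q} - ?T) + card (?T - {p, q}) \<le> 1"
    using dist T(2) by (subst card_Un_disjoint[symmetric]) auto
  moreover have "?T \<noteq> {}" using dist pq(3) by auto
  then have "3 \<le> card ?T" using perfect1_min_weight[OF x(1)] by blast
  moreover have "card ?T = card (?T \<inter> {p, q}) + card (?T - {p, q})" by (rule card_Int_Diff[OF T(2)])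
  moreover have "card (?T \<inter> {p, q}) + card ({p, q} - ?T) = 2"
    using card_Int_Diff[of "{p, q}" ?T] pq(3) by (simp add: Int_commute)
  ultimately have "card ({p, q} - ?T) = 0" "card (?T - {p, q}) = 1" by linarith+
  then have "{p, q} \<subseteq> ?T" "card (?T - {p, q}) = 1" by auto
  then obtain s where "?T - {p, q} = {s}" by (auto simp: card_1_singleton_iff)
  then have "?T = {p, q, s}" "s \<noteq> p" "s \<noteq> q" using \<open>{p, q} \<subseteq> ?T\<close> by auto
  moreover have "s < n" using \<open>?T = {p, q, s}\<close> T(1) by auto
  ultimately show thesis using that x(1) by blast
qed

end

section \<open>The Gray map\<close>

lemma length_gray [simp]: "length (gray x) = 2"
  by (simp add: gray_def)

lemma length_concat_map_gray [simp]: "length (concat (map gray ys)) = 2 * length ys"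
  by (induction ys) auto

lemma concat_map_gray_nth:
  "j < length ys \<Longrightarrow> concat (map gray ys) ! (2 * j) = (ys ! j \<noteq> 0 \<and> ys ! j \<noteq> 1)
     \<and> concat (map gray ys) ! (2 * j + 1) = (ys ! j = 1 \<or> ys ! j = 2)"
proof (induction ys arbitrary: j)
  case (Cons y ys)
  show ?case
  proof (cases j)
    case (Suc j')
    then show ?thesis using Cons by (simp add: nth_append)
  qed (simp add: gray_def)
qed simp

lemma length_Gray: "v \<in> z2z4_space a b \<Longrightarrow> length (Gray v) = a + 2 * b"
  by (simp add: Gray_def z2z4_space_iff)

lemma Gray_nth:
  assumes "v \<in> z2z4_space a b"
  shows "i < a \<Longrightarrow> Gray v ! i = (fst v ! i = 1)"
    and "j < b \<Longrightarrow> Gray v ! (a + 2 * j) = (snd v ! j \<in> {2, 3})"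
    and "j < b \<Longrightarrow> Gray v ! (a + 2 * j + 1) = (snd v ! j \<in> {1, 2})"
proof -
  have len: "length (fst v) = a" "length (snd v) = b" using assms by (auto simp: z2z4_space_iff)
  show "i < a \<Longrightarrow> Gray v ! i = (fst v ! i = 1)" using len by (simp add: Gray_def nth_append)
  assume j: "j < b"
  then have "snd v ! j \<in> {0, 1, 2, 3}" using assms by (auto simp: z2z4_space_iff)
  then show "Gray v ! (a + 2 * j) = (snd v ! j \<in> {2, 3})"
    and "Gray v ! (a + 2 * j + 1) = (snd v ! j \<in> {1, 2})"
    using concat_map_gray_nth[of j "snd v"] len j by (auto simp: Gray_def nth_append)
qed

lemma Gray_zero: "Gray (z2z4_zero a b) = replicate (a + 2 * b) False"
proof -
  have "concat (replicate b [False, False]) = replicate (2 * b) False" by (induction b) auto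
  then show ?thesis by (simp add: Gray_def z2z4_zero_def gray_def replicate_add)
qed

definition gray_support :: "z2z4vec \<Rightarrow> nat set" where
  "gray_support v = word_support (Gray v)"

lemma gray_support_subset: "v \<in> z2z4_space a b \<Longrightarrow> gray_support v \<subseteq> {..<a + 2 * b}"
  using word_support_subset length_Gray unfolding gray_support_def by metis

lemma gray_position_cases:
  fixes k a b :: nat
  assumes "k < a + 2 * b"
  obtains (binary) "k < a"
    | (first) j where "j < b" "k = a + 2 * j"
    | (second) j where "j < b" "k = a + 2 * j + 1"
proof -
  consider "k < a" | "even (k - a)" "\<not> k < a" | "odd (k - a)" "\<not> k < a" by blast
  then show thesis
  proof cases
    case 2
    then have "k - a = 2 * ((k - a) div 2)" by (metis dvd_mult_div_cancel)
    then have "(k - a) div 2 < b" "k = a + 2 * ((k - a) div 2)" using assms 2(2) by linarith+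
    then show thesis by (rule first)
  next
    case 3
    then have "k - a = 2 * ((k - a) div 2) + 1" by (metis odd_two_times_div_two_succ)
    then have "(k - a) div 2 < b" "k = a + 2 * ((k - a) div 2) + 1" using assms 3(2) by linarith+
    then show thesis by (rule second)
  qed (rule binary)
qed

lemma gray_support_binary:
  "v \<in> z2z4_space a b \<Longrightarrow> i < a \<Longrightarrow> i \<in> gray_support v \<longleftrightarrow> fst v ! i = 1"
  using Gray_nth(1) length_Gray by (auto simp: gray_support_def word_support_def)

lemma gray_support_first:
  "v \<in> z2z4_space a b \<Longrightarrow> j < b \<Longrightarrow> a + 2 * j \<in> gray_support v \<longleftrightarrow> snd v ! j \<in> {2, 3}"
  using Gray_nth(2) length_Gray by (auto simp: gray_support_def word_support_def)

lemma gray_support_second: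
  "v \<in> z2z4_space a b \<Longrightarrow> j < b \<Longrightarrow> a + 2 * j + 1 \<in> gray_support v \<longleftrightarrow> snd v ! j \<in> {1, 2}"
  using Gray_nth(3) length_Gray by (auto simp: gray_support_def word_support_def)

text \<open>The quaternary value with Gray image \<open>[x, y]\<close>.\<close>

definition gray_decode :: "bool \<Rightarrow> bool \<Rightarrow> int" where
  "gray_decode x y = (if x then (if y then 2 else 3) else (if y then 1 else 0))"

definition gray_vec :: "nat \<Rightarrow> nat \<Rightarrow> nat set \<Rightarrow> z2z4vec" where
  "gray_vec a b S = z2z4_vec a b (\<lambda>i. of_bool (i \<in> S)) (\<lambda>j. gray_decode (a + 2 * j \<in> S) (a + 2 * j + 1 \<in> S))"

lemma gray_vec_in_space: "gray_vec a b S \<in> z2z4_space a b"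
  unfolding gray_vec_def by (rule z2z4_vec_in_space) (auto simp: gray_decode_def)

lemma gray_vec_nth:
  "i < a \<Longrightarrow> fst (gray_vec a b S) ! i = of_bool (i \<in> S)"
  "j < b \<Longrightarrow> snd (gray_vec a b S) ! j = gray_decode (a + 2 * j \<in> S) (a + 2 * j + 1 \<in> S)"
  by (simp_all add: gray_vec_def z2z4_vec_def)

lemma gray_decode_bits: "gray_decode x y \<in> {2, 3} \<longleftrightarrow> x" "gray_decode x y \<in> {1, 2} \<longleftrightarrow> y"
  by (simp_all add: gray_decode_def)

lemma gray_support_gray_vec:
  assumes "S \<subseteq> {..<a + 2 * b}"
  shows "gray_support (gray_vec a b S) = S"
proof -
  note v = gray_vec_in_space[of a b S]
  have "k \<in> gray_support (gray_vec a b S) \<longleftrightarrow> k \<in> S" if "k < a + 2 * b" for k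
    using that
  proof (cases rule: gray_position_cases)
    case binary
    then show ?thesis by (simp add: gray_support_binary[OF v] gray_vec_nth)
  next
    case (first j)
    then show ?thesis by (simp only: gray_support_first[OF v] gray_vec_nth gray_decode_bits)
  next
    case (second j)
    then show ?thesis by (simp only: gray_support_second[OF v] gray_vec_nth gray_decode_bits)
  qed
  then show ?thesis using assms gray_support_subset[OF v] by blast
qed

lemma gray_vec_gray_support:
  assumes v: "v \<in> z2z4_space a b"
  shows "gray_vec a b (gray_support v) = v"
proof (rule z2z4_space_eqI[OF gray_vec_in_space v])
  fix i assume "i < a"
  then show "fst (gray_vec a b (gray_support v)) ! i = fst v ! i"
    using v gray_support_binary[OF v] by (auto simp: gray_vec_nth z2z4_space_iff)
next
  fix j assume j: "j < b"
  then have "snd v ! j \<in> {0, 1, 2, 3}" using v by (auto simp: z2z4_space_iff)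
  then show "snd (gray_vec a b (gray_support v)) ! j = snd v ! j"
    using j gray_support_first[OF v j] gray_support_second[OF v j]
    by (auto simp: gray_vec_nth gray_decode_def)
qed

lemma gray_first_neq_second [simp]: "(a::nat) + 2 * k \<noteq> Suc (a + 2 * j)"
  by presburger

lemma gray_second_neq_first [simp]: "Suc ((a::nat) + 2 * k) \<noteq> a + 2 * j"
  by presburger

definition gray_coords :: "nat \<Rightarrow> nat set \<Rightarrow> nat set" where
  "gray_coords a S = (\<lambda>k. (k - a) div 2) ` (S - {..<a})"

lemma gray_coords_empty [simp]: "gray_coords a {} = {}"
  by (simp add: gray_coords_def)

lemma gray_coords_insert_binary [simp]: "k < a \<Longrightarrow> gray_coords a (insert k S) = gray_coords a S"
  by (simp add: gray_coords_def insert_Diff_if)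

lemma gray_coords_insert_first [simp]:
  "gray_coords a (insert (a + 2 * j) S) = insert j (gray_coords a S)"
  by (simp add: gray_coords_def insert_Diff_if)

lemma gray_coords_insert_second [simp]:
  "gray_coords a (insert (Suc (a + 2 * j)) S) = insert j (gray_coords a S)"
  by (simp add: gray_coords_def insert_Diff_if)

lemma z2z4_inner_gray_vec:
  assumes w: "length (fst w) = a" "length (snd w) = b" and S: "S \<subseteq> {..<a + 2 * b}"
  shows "z2z4_inner w (gray_vec a b S) = (2 * (\<Sum>i\<in>S \<inter> {..<a}. fst w ! i)
    + (\<Sum>j\<in>gray_coords a S. snd w ! j * gray_decode (a + 2 * j \<in> S) (a + 2 * j + 1 \<in> S))) mod 4"
proof -
  have "(\<Sum>i<a. fst w ! i * of_bool (i \<in> S)) = (\<Sum>i<a. if i \<in> S then fst w ! i else 0)"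
    by (intro sum.cong) auto
  also have "\<dots> = (\<Sum>i\<in>{..<a} \<inter> S. fst w ! i)" by (rule sum.inter_restrict[symmetric]) simp
  finally have bin: "(\<Sum>i<a. fst w ! i * of_bool (i \<in> S)) = (\<Sum>i\<in>S \<inter> {..<a}. fst w ! i)"
    by (simp add: Int_commute)
  have "(\<Sum>j<b. snd w ! j * gray_decode (a + 2 * j \<in> S) (a + 2 * j + 1 \<in> S))
      = (\<Sum>j\<in>gray_coords a S. snd w ! j * gray_decode (a + 2 * j \<in> S) (a + 2 * j + 1 \<in> S))"
  proof (rule sum.mono_neutral_right)
    show "gray_coords a S \<subseteq> {..<b}" using S by (auto simp: gray_coords_def)
    have "j \<in> gray_coords a S" if "a + 2 * j \<in> S \<or> a + 2 * j + 1 \<in> S" for j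
      using that unfolding gray_coords_def by (force intro: image_eqI[where x = "a + 2 * j"] image_eqI[where x = "a + 2 * j + 1"])
    then show "\<forall>j\<in>{..<b} - gray_coords a S. snd w ! j * gray_decode (a + 2 * j \<in> S) (a + 2 * j + 1 \<in> S) = 0"
      by (auto simp: gray_decode_def)
  qed simp
  with bin show ?thesis unfolding gray_vec_def z2z4_inner_vec[OF w] by simp
qed

definition binary_support :: "nat \<Rightarrow> z2z4vec \<Rightarrow> nat set" where
  "binary_support a w = {i. i < a \<and> fst w ! i = 1}"

lemma finite_binary_support [simp]: "finite (binary_support a w)"
  by (simp add: binary_support_def)

lemma binary_support_z2z4_add:
  assumes x: "x \<in> z2z4_space a b" and y: "y \<in> z2z4_space a b"
  shows "binary_support a (z2z4_add x y) = sym_diff (binary_support a x) (binary_support a y)"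
proof -
  have "fst (z2z4_add x y) ! i = 1 \<longleftrightarrow> (fst x ! i = 1) \<noteq> (fst y ! i = 1)" if i: "i < a" for i
  proof -
    have "fst x ! i \<in> {0, 1}" "fst y ! i \<in> {0, 1}" using x y i by (auto simp: z2z4_space_iff)
    then show ?thesis using z2z4_add_in_space(2)[OF x y i] by auto
  qed
  then show ?thesis by (auto simp: binary_support_def)
qed

section \<open>Rotations and counting\<close>

lemma length_rshift [simp]: "length (rshift xs) = length xs"
  by (cases xs) (auto simp: rshift_def)

lemma rshift_nth:
  assumes "i < length xs"
  shows "rshift xs ! i = xs ! ((i + (length xs - 1)) mod length xs)"
proof (cases i)
  case 0
  then show ?thesis using assms by (simp add: rshift_def last_conv_nth)
next
  case (Suc i')
  have "i + (length xs - 1) = i' + length xs" using Suc assms by (cases xs) auto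
  then have "(i + (length xs - 1)) mod length xs = i'" using Suc assms by simp
  moreover have "rshift xs ! i = butlast xs ! i'" using Suc assms by (auto simp: rshift_def)
  moreover have "butlast xs ! i' = xs ! i'" using Suc assms by (simp add: nth_butlast)
  ultimately show ?thesis by simp
qed

lemma length_funpow_rshift [simp]: "length ((rshift ^^ m) xs) = length xs"
  by (induction m) auto

lemma funpow_rshift_nth:
  assumes i: "i < length xs"
  shows "(rshift ^^ m) xs ! ((i + m) mod length xs) = xs ! i"
proof (induction m)
  case (Suc m)
  let ?L = "length xs"
  have "0 < ?L" using i by linarith
  then have idx: "(i + Suc m) mod ?L < length ((rshift ^^ m) xs)" by simp
  have "((i + Suc m) mod ?L + (?L - 1)) mod ?L = (i + Suc m + (?L - 1)) mod ?L"
    by (simp add: mod_add_left_eq)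
  also have "i + Suc m + (?L - 1) = (i + m) + ?L" using i by simp
  finally have "((i + Suc m) mod ?L + (?L - 1)) mod ?L = (i + m) mod ?L" by simp
  then show ?case using rshift_nth[OF idx] Suc.IH by simp
qed (use i in simp)

lemma funpow_z2z4_sigma: "(z2z4_sigma ^^ m) w = ((rshift ^^ m) (fst w), (rshift ^^ m) (snd w))"
  by (induction m) (auto simp: z2z4_sigma_def)

lemma bij_betw_add_mod:
  assumes "f < (a::nat)"
  shows "bij_betw (\<lambda>l. (l + f) mod a) {..<a} {..<a}"
proof -
  have rotate_back: "((l + e) mod a + e') mod a = l" if "l < a" "e + e' = a" for l e e'
  proof -
    have "((l + e) mod a + e') mod a = (l + e + e') mod a" by (simp only: mod_add_left_eq)
    also have "l + e + e' = l + a" using that(2) by simp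
    finally show ?thesis using that(1) by simp
  qed
  show ?thesis
  proof (rule bij_betw_byWitness[where f' = "\<lambda>l. (l + (a - f)) mod a"])
    show "\<forall>l\<in>{..<a}. ((l + f) mod a + (a - f)) mod a = l"
      using assms by (intro ballI rotate_back) auto
    show "\<forall>l\<in>{..<a}. ((l + (a - f)) mod a + f) mod a = l"
      using assms by (intro ballI rotate_back) auto
  qed (use assms in auto)
qed

lemma card_Collect_lessThan_eq_sum: "card {l. l < (n::nat) \<and> P l} = (\<Sum>l<n. of_bool (P l))"
proof -
  have "{l. l < n \<and> P l} = {..<n} \<inter> {l. P l}" by auto
  then show ?thesis by simp
qed

lemma card_Collect_rotate:
  assumes "f < (a::nat)"
  shows "card {l. l < a \<and> P ((l + f) mod a)} = card {i. i < a \<and> P i}"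
  using sum.reindex_bij_betw[OF bij_betw_add_mod[OF assms], of "\<lambda>i. of_bool (P i) :: nat"]
  by (simp only: card_Collect_lessThan_eq_sum)

lemma card_sym_diff:
  assumes "finite A" "finite B" "card A = card B"
  shows "card (sym_diff A B) = 2 * card (B - A)"
proof -
  have "card A = card (A \<inter> B) + card (A - B)" "card B = card (B \<inter> A) + card (B - A)"
    using card_Int_Diff assms(1,2) by blast+
  then have "card (A - B) = card (B - A)" using assms(3) by (simp add: Int_commute)
  moreover have "card ((A - B) \<union> (B - A)) = card (A - B) + card (B - A)"
    by (rule card_Un_disjoint) (use assms in auto)
  ultimately show ?thesis by simp
qed

section \<open>Relations imposed by a perfect code on its dual\<close>

locale z2z4_perfect_code =
  fixes a b :: nat and C :: "z2z4vec set"
  assumes additive: "z2z4_additive a b C"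
    and perfect: "perfect1 (a + 2 * b) (Gray ` C)"
begin

abbreviation D :: "z2z4vec set" where
  "D \<equiv> z2z4_dual a b C"

lemma code_subset_space: "C \<subseteq> z2z4_space a b"
  using additive by (simp add: z2z4_additive_def)

lemma dual_subset_space: "D \<subseteq> z2z4_space a b"
  by (auto simp: z2z4_dual_def)

lemma dual_additive: "z2z4_additive a b D"
  by (rule z2z4_additive_dual[OF code_subset_space])

lemma dual_nth_range:
  assumes "w \<in> D"
  shows "i < a \<Longrightarrow> fst w ! i \<in> {0, 1}" and "j < b \<Longrightarrow> snd w ! j \<in> {0, 1, 2, 3}"
    and "length (fst w) = a" and "length (snd w) = b"
proof -
  have "w \<in> z2z4_space a b" using assms dual_subset_space by blast
  then show "i < a \<Longrightarrow> fst w ! i \<in> {0, 1}" and "j < b \<Longrightarrow> snd w ! j \<in> {0, 1, 2, 3}"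
    and "length (fst w) = a" and "length (snd w) = b"
    by (simp_all add: z2z4_space_iff)
qed

lemma Gray_zero_in_code: "replicate (a + 2 * b) False \<in> Gray ` C"
proof -
  have "z2z4_zero a b \<in> C" using additive by (simp add: z2z4_additive_def)
  then show ?thesis using Gray_zero by (metis image_eqI)
qed

lemma code_gray_weight:
  assumes "c \<in> C" "gray_support c \<noteq> {}"
  shows "3 \<le> card (gray_support c)"
  using perfect1_min_weight[OF perfect Gray_zero_in_code, of "Gray c"] assms
  unfolding gray_support_def by blast

lemma code_gray_triple:
  assumes "p < a + 2 * b" "q < a + 2 * b" "p \<noteq> q"
  obtains c s where "c \<in> C" "s < a + 2 * b" "s \<noteq> p" "s \<noteq> q" "gray_support c = {p, q, s}"
proof -
  from perfect1_triple[OF perfect Gray_zero_in_code assms] obtain x s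
    where "x \<in> Gray ` C" "s < a + 2 * b" "s \<noteq> p" "s \<noteq> q" "word_support x = {p, q, s}" .
  then show thesis using that unfolding gray_support_def by blast
qed

lemma dual_orthogonal_gray_vec:
  assumes "c \<in> C" "w \<in> D"
  shows "z2z4_inner w (gray_vec a b (gray_support c)) = 0"
proof -
  have c: "c \<in> z2z4_space a b" and w: "w \<in> z2z4_space a b"
    using assms code_subset_space dual_subset_space by blast+
  have "z2z4_inner c w = 0" using assms by (simp add: z2z4_dual_def)
  then show ?thesis using z2z4_inner_commute[OF c w] gray_vec_gray_support[OF c] by simp
qed

lemma code_relation:
  assumes "c \<in> C" "w \<in> D" "gray_support c = S"
  shows "(2 * (\<Sum>i\<in>S \<inter> {..<a}. fst w ! i)
    + (\<Sum>j\<in>gray_coords a S. snd w ! j * gray_decode (a + 2 * j \<in> S) (a + 2 * j + 1 \<in> S))) mod 4 = 0"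
proof -
  have "c \<in> z2z4_space a b" using assms(1) code_subset_space by blast
  then have S: "S \<subseteq> {..<a + 2 * b}" using gray_support_subset assms(3) by blast
  have "z2z4_inner w (gray_vec a b S) = 0" using dual_orthogonal_gray_vec[OF assms(1,2)] assms(3) by simp
  then show ?thesis
    unfolding z2z4_inner_gray_vec[OF dual_nth_range(3,4)[OF assms(2)] S] .
qed

lemma gray_vec_separated_by_dual:
  assumes "S \<subseteq> {..<a + 2 * b}" "S \<noteq> {}" "card S \<le> 2"
  obtains w where "w \<in> D" "z2z4_inner w (gray_vec a b S) \<noteq> 0"
proof -
  have "gray_vec a b S \<notin> C"
  proof
    assume "gray_vec a b S \<in> C"
    then have "3 \<le> card S" using code_gray_weight gray_support_gray_vec[OF assms(1)] assms(2) by metis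
    then show False using assms(3) by simp
  qed
  then have "gray_vec a b S \<notin> z2z4_dual a b D" using z2z4_dual_dual[OF additive] by simp
  then show thesis using that gray_vec_in_space unfolding z2z4_dual_def by blast
qed

lemma dual_separates_binary:
  assumes "i < a" "i' < a" "i \<noteq> i'"
  obtains w where "w \<in> D" "fst w ! i \<noteq> fst w ! i'"
proof -
  obtain w where w: "w \<in> D" "z2z4_inner w (gray_vec a b {i, i'}) \<noteq> 0"
    using gray_vec_separated_by_dual[of "{i, i'}"] assms by auto
  have "{i, i'} \<inter> {..<a} = {i, i'}" "gray_coords a {i, i'} = {}" using assms by auto
  then have "(2 * (fst w ! i + fst w ! i')) mod 4 \<noteq> 0"
    using w(2) assms(3) z2z4_inner_gray_vec[OF dual_nth_range(3,4)[OF w(1)], of "{i, i'}"] assms(1,2)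
    by simp
  then have "fst w ! i \<noteq> fst w ! i'" by auto
  with w(1) show thesis by (rule that)
qed

lemma dual_quaternary_odd:
  assumes "j < b"
  obtains w where "w \<in> D" "odd (snd w ! j)"
proof -
  let ?S = "{a + 2 * j, a + 2 * j + 1}"
  obtain w where w: "w \<in> D" "z2z4_inner w (gray_vec a b ?S) \<noteq> 0"
    using gray_vec_separated_by_dual[of ?S] assms by auto
  have "?S \<inter> {..<a} = {}" "gray_coords a ?S = {j}" by auto
  then have "(2 * snd w ! j) mod 4 \<noteq> 0"
    using w(2) z2z4_inner_gray_vec[OF dual_nth_range(3,4)[OF w(1)], of ?S] assms
    by (simp add: gray_decode_def mult.commute)
  then have "odd (snd w ! j)" by (auto elim!: evenE)
  with w(1) show thesis by (rule that)
qed

lemma dual_no_odd_relation: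
  assumes "k < b" "odd e"
    and "\<And>w. w \<in> D \<Longrightarrow> (X w + snd w ! k * e) mod 4 = 0" "\<And>w. w \<in> D \<Longrightarrow> even (X w)"
  shows False
proof -
  obtain w where w: "w \<in> D" "odd (snd w ! k)" using dual_quaternary_odd[OF assms(1)] .
  then show False using even_of_relation[OF assms(3)[OF w(1)] assms(4)[OF w(1)] assms(2)] by simp
qed

lemma quaternary_parity_coordinate:
  assumes j: "j < b"
  obtains f where "f < a" "\<forall>w\<in>D. snd w ! j mod 2 = fst w ! f"
proof -
  obtain c s where c: "c \<in> C" "s < a + 2 * b" "s \<noteq> a + 2 * j" "s \<noteq> a + 2 * j + 1"
    and S: "gray_support c = {a + 2 * j, a + 2 * j + 1, s}"
    using code_gray_triple[of "a + 2 * j" "a + 2 * j + 1"] j by auto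
  from c(2) show thesis
  proof (cases rule: gray_position_cases)
    case binary
    have "snd w ! j mod 2 = fst w ! s" if w: "w \<in> D" for w
    proof -
      have "(2 * fst w ! s + snd w ! j * 2) mod 4 = 0"
        using code_relation[OF c(1) w S] binary by (simp add: gray_decode_def)
      then have "snd w ! j mod 2 = fst w ! s mod 2" by (rule parity_of_relation)
      then show ?thesis using dual_nth_range(1)[OF w binary] by auto
    qed
    then show thesis using that binary by blast
  next
    case (first j')
    have "j' \<noteq> j" using first c(3) by auto
    have "even (snd w ! j')" if w: "w \<in> D" for w
    proof (rule even_of_relation)
      have "(snd w ! j * 2 + snd w ! j' * 3) mod 4 = 0"
        using code_relation[OF c(1) w S] first \<open>j' \<noteq> j\<close> by (simp add: gray_decode_def)
      then show "(2 * snd w ! j + snd w ! j' * 3) mod 4 = 0" by (simp add: mult.commute)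
    qed simp_all
    then show thesis using dual_quaternary_odd[OF first(1)] by blast
  next
    case (second j')
    have "j' \<noteq> j" using second c(4) by auto
    have "even (snd w ! j')" if w: "w \<in> D" for w
    proof (rule even_of_relation)
      have "(snd w ! j * 2 + snd w ! j') mod 4 = 0"
        using code_relation[OF c(1) w S] second \<open>j' \<noteq> j\<close> by (simp add: gray_decode_def)
      then show "(2 * snd w ! j + snd w ! j' * 1) mod 4 = 0" by (simp add: mult.commute)
    qed simp_all
    then show thesis using dual_quaternary_odd[OF second(1)] by blast
  qed
qed

lemma binary_triple_coordinate:
  assumes "i < a" "i' < a" "i \<noteq> i'"
  obtains v where "v < a" "v \<noteq> i" "v \<noteq> i'" "\<forall>w\<in>D. even (fst w ! i + fst w ! i' + fst w ! v)"
proof -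
  obtain c s where c: "c \<in> C" "s < a + 2 * b" "s \<noteq> i" "s \<noteq> i'" and S: "gray_support c = {i, i', s}"
    using code_gray_triple[of i i'] assms by auto
  from c(2) show thesis
  proof (cases rule: gray_position_cases)
    case binary
    have "even (fst w ! i + fst w ! i' + fst w ! s)" if w: "w \<in> D" for w
    proof -
      have "(2 * (fst w ! i + (fst w ! i' + fst w ! s))) mod 4 = 0"
        using code_relation[OF c(1) w S] binary assms c(3,4) by simp
      then show ?thesis by (simp add: add.assoc) presburger
    qed
    then show thesis using that binary c(3,4) by blast
  next
    case (first j)
    have "even (snd w ! j)" if w: "w \<in> D" for w
    proof (rule even_of_relation)
      show "(2 * (fst w ! i + fst w ! i') + snd w ! j * 3) mod 4 = 0"
        using code_relation[OF c(1) w S] first assms by (simp add: gray_decode_def)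
    qed simp_all
    then show thesis using dual_quaternary_odd[OF first(1)] by blast
  next
    case (second j)
    have "even (snd w ! j)" if w: "w \<in> D" for w
    proof (rule even_of_relation)
      show "(2 * (fst w ! i + fst w ! i') + snd w ! j * 1) mod 4 = 0"
        using code_relation[OF c(1) w S] second assms by (simp add: gray_decode_def)
    qed simp_all
    then show thesis using dual_quaternary_odd[OF second(1)] by blast
  qed
qed

lemma binary_triple_unique:
  assumes "u < a" "u' < a"
    and "\<forall>w\<in>D. even (fst w ! t + fst w ! u + fst w ! v)"
    and "\<forall>w\<in>D. even (fst w ! t + fst w ! u' + fst w ! v)"
  shows "u = u'"
proof (rule ccontr)
  assume "u \<noteq> u'"
  then obtain w where w: "w \<in> D" "fst w ! u \<noteq> fst w ! u'"
    using dual_separates_binary assms(1,2) by blast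
  have "even (fst w ! t + fst w ! u + fst w ! v)" "even (fst w ! t + fst w ! u' + fst w ! v)"
    using assms(3,4) w(1) by blast+
  then have "even (fst w ! u + fst w ! u')" by presburger
  moreover have "fst w ! u \<in> {0, 1}" "fst w ! u' \<in> {0, 1}" using dual_nth_range(1)[OF w(1)] assms(1,2) by auto
  ultimately show False using w(2) by auto
qed

lemma binary_triple_function:
  assumes t: "t < a"
  obtains third where "\<And>i. i < a \<Longrightarrow> i \<noteq> t \<Longrightarrow>
      third i < a \<and> third i \<noteq> t \<and> (\<forall>w\<in>D. even (fst w ! t + fst w ! i + fst w ! third i))"
    and "inj_on third ({..<a} - {t})"
proof -
  have "\<forall>i\<in>{..<a} - {t}. \<exists>v. v < a \<and> v \<noteq> t \<and> (\<forall>w\<in>D. even (fst w ! t + fst w ! i + fst w ! v))"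
  proof
    fix i assume "i \<in> {..<a} - {t}"
    then have "i < a" "t \<noteq> i" by auto
    then obtain v where "v < a" "v \<noteq> t" "v \<noteq> i" "\<forall>w\<in>D. even (fst w ! t + fst w ! i + fst w ! v)"
      by (rule binary_triple_coordinate[OF t])
    then show "\<exists>v. v < a \<and> v \<noteq> t \<and> (\<forall>w\<in>D. even (fst w ! t + fst w ! i + fst w ! v))" by blast
  qed
  then obtain third where third: "\<forall>i\<in>{..<a} - {t}.
      third i < a \<and> third i \<noteq> t \<and> (\<forall>w\<in>D. even (fst w ! t + fst w ! i + fst w ! third i))"
    by (rule bchoice[THEN exE])
  show thesis
  proof (rule that)
    show "third i < a \<and> third i \<noteq> t \<and> (\<forall>w\<in>D. even (fst w ! t + fst w ! i + fst w ! third i))"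
      if "i < a" "i \<noteq> t" for i
      by (rule bspec[OF third]) (use that in simp)
    show "inj_on third ({..<a} - {t})"
    proof (rule inj_onI)
      fix u u' assume u: "u \<in> {..<a} - {t}" "u' \<in> {..<a} - {t}" "third u = third u'"
      have "u < a" "u' < a" using u(1,2) by auto
      have "\<forall>w\<in>D. even (fst w ! t + fst w ! u + fst w ! third u)"
        using bspec[OF third u(1)] by (rule conjunct2[THEN conjunct2])
      moreover have "\<forall>w\<in>D. even (fst w ! t + fst w ! u' + fst w ! third u)"
        using bspec[OF third u(2)] unfolding u(3) by (rule conjunct2[THEN conjunct2])
      ultimately show "u = u'" by (rule binary_triple_unique[OF \<open>u < a\<close> \<open>u' < a\<close>])
    qed
  qed
qed

text \<open>The binary coordinates form a Steiner triple system: every pair \<open>{t, i}\<close> lies in a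
  unique relation \<open>{t, i, v}\<close>. Fixing \<open>t\<close> in the support, \<open>i \<mapsto> v\<close> maps the zeros of \<open>w\<close>
  into its other ones and vice versa.\<close>
lemma dual_binary_weight:
  assumes w: "w \<in> D" and nonzero: "binary_support a w \<noteq> {}"
  shows "2 * card (binary_support a w) = a + 1"
proof -
  let ?T = "binary_support a w"
  let ?U = "{i. i < a \<and> fst w ! i = 0}"
  from nonzero obtain t where t: "t < a" "fst w ! t = 1" by (auto simp: binary_support_def)
  obtain third where third: "\<And>i. i < a \<Longrightarrow> i \<noteq> t \<Longrightarrow>
      third i < a \<and> third i \<noteq> t \<and> (\<forall>w\<in>D. even (fst w ! t + fst w ! i + fst w ! third i))"
    and inj: "inj_on third ({..<a} - {t})"
    using binary_triple_function[OF t(1)] by blast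
  have binary_values: "fst w ! i = 0 \<or> fst w ! i = 1" if "i < a" for i
    using dual_nth_range(1)[OF w that] by auto
  have to_T: "third ` ?U \<subseteq> ?T - {t}"
  proof
    fix v assume "v \<in> third ` ?U"
    then obtain u where u: "u < a" "fst w ! u = 0" "v = third u" by blast
    have "u \<noteq> t" using u(2) t(2) by auto
    have "v < a" "v \<noteq> t" "even (fst w ! t + fst w ! u + fst w ! v)"
      using third[OF u(1) \<open>u \<noteq> t\<close>] w u(3) by blast+
    then show "v \<in> ?T - {t}" using binary_values[of v] t(2) u(2) by (auto simp: binary_support_def)
  qed
  have to_U: "third ` (?T - {t}) \<subseteq> ?U"
  proof
    fix v assume "v \<in> third ` (?T - {t})"
    then obtain u where u: "u < a" "fst w ! u = 1" "u \<noteq> t" "v = third u" by (auto simp: binary_support_def)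
    have "v < a" "even (fst w ! t + fst w ! u + fst w ! v)"
      using third[OF u(1) u(3)] w u(4) by blast+
    then show "v \<in> ?U" using binary_values[of v] t(2) u(2) by auto
  qed
  have "card ?U \<le> card (?T - {t})"
    by (rule card_inj_on_le[OF inj_on_subset[OF inj] to_T]) (auto simp: t(2))
  moreover have "card (?T - {t}) \<le> card ?U"
    by (rule card_inj_on_le[OF inj_on_subset[OF inj] to_U]) (auto simp: binary_support_def)
  moreover have "card ?T + card ?U = a"
  proof -
    have "?T \<union> ?U = {..<a}" "?T \<inter> ?U = {}" using binary_values by (auto simp: binary_support_def)
    then show ?thesis using card_Un_disjoint[of ?T ?U] by simp
  qed
  moreover have t_T: "t \<in> ?T" using t by (simp add: binary_support_def)
  moreover have "card (?T - {t}) = card ?T - 1" using t_T by (rule card_Diff_singleton)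
  moreover have "card ?T \<ge> 1" using t_T by (auto simp: Suc_le_eq card_gt_0_iff)
  ultimately show ?thesis by linarith
qed

lemma pair_triple_no_second_bit:
  assumes j: "j < b" "J < b" "j \<noteq> J" "j' < b"
    and same_parity: "\<And>w. w \<in> D \<Longrightarrow> snd w ! j mod 2 = snd w ! J mod 2"
    and c: "c \<in> C" "gray_support c = {a + 2 * j, a + 2 * J, a + 2 * j' + 1}"
  shows False
proof -
  consider "j' = j" | "j' = J" | "j' \<noteq> j" "j' \<noteq> J" by blast
  then show False
  proof cases
    case 1
    show False
    proof (rule dual_no_odd_relation[OF j(2), where e = 3 and X = "\<lambda>w. snd w ! j * 2"])
      show "(snd w ! j * 2 + snd w ! J * 3) mod 4 = 0" if "w \<in> D" for w
        using code_relation[OF c(1) that c(2)] 1 j by (simp add: gray_decode_def insert_absorb add.commute)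
    qed simp_all
  next
    case 2
    show False
    proof (rule dual_no_odd_relation[OF j(1), where e = 3 and X = "\<lambda>w. snd w ! J * 2"])
      show "(snd w ! J * 2 + snd w ! j * 3) mod 4 = 0" if "w \<in> D" for w
        using code_relation[OF c(1) that c(2)] 2 j by (simp add: gray_decode_def insert_absorb add.commute)
    qed simp_all
  next
    case 3
    show False
    proof (rule dual_no_odd_relation[OF j(4), where e = 1 and X = "\<lambda>w. snd w ! j * 3 + snd w ! J * 3"])
      show "(snd w ! j * 3 + snd w ! J * 3 + snd w ! j' * 1) mod 4 = 0" if "w \<in> D" for w
        using code_relation[OF c(1) that c(2)] j 3 by (simp add: gray_decode_def add.assoc)
      show "even (snd w ! j * 3 + snd w ! J * 3)" if "w \<in> D" for w
        using same_parity[OF that] by presburger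
    qed simp
  qed
qed

lemma pair_triple_third_binary:
  assumes j: "j < b" "J < b" "j \<noteq> J"
    and same_parity: "\<And>w. w \<in> D \<Longrightarrow> snd w ! j mod 2 = snd w ! J mod 2"
    and c: "c \<in> C" "s < a + 2 * b" "s \<noteq> a + 2 * j" "s \<noteq> a + 2 * J"
    and S: "gray_support c = {a + 2 * j, a + 2 * J, s}"
  shows "s < a"
  using c(2)
proof (cases rule: gray_position_cases)
  case binary
  then show ?thesis .
next
  case (first j')
  have "j' \<noteq> j" "j' \<noteq> J" using first c(3,4) by auto
  show ?thesis
  proof (rule FalseE, rule dual_no_odd_relation[OF first(1), where e = 3])
    show "(snd w ! j * 3 + snd w ! J * 3 + snd w ! j' * 3) mod 4 = 0" if w: "w \<in> D" for w
      using code_relation[OF c(1) w S] first j \<open>j' \<noteq> j\<close> \<open>j' \<noteq> J\<close> by (simp add: gray_decode_def add.assoc)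
    show "even (snd w ! j * 3 + snd w ! J * 3)" if "w \<in> D" for w
      using same_parity[OF that] by presburger
  qed simp
next
  case (second j')
  then show ?thesis using pair_triple_no_second_bit[OF j second(1) same_parity c(1)] S by simp
qed

end

section \<open>Cyclic duals\<close>

locale z2z4_cyclic_perfect_code = z2z4_perfect_code +
  assumes cyclic: "z2z4_cyclic D"
    and block_length: "a dvd b"
    and quaternary_pos: "0 < b"
begin

lemma binary_pos: "0 < a"
  using block_length quaternary_pos by (auto intro: Nat.gr0I)

lemma binary_le_quaternary: "a \<le> b"
  using block_length quaternary_pos by (rule dvd_imp_le)

lemma dual_funpow_sigma: "w \<in> D \<Longrightarrow> (z2z4_sigma ^^ m) w \<in> D"
  using cyclic by (induction m) (auto simp: z2z4_cyclic_def)

text \<open>Since \<open>a\<close> divides \<open>b\<close>, shifting by \<open>b - t\<close> rotates both parts backwards by \<open>t\<close>.\<close>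

lemma dual_rotate:
  assumes w: "w \<in> D" and t: "t \<le> b"
  obtains w' where "w' \<in> D" "\<And>i. i < a \<Longrightarrow> fst w' ! i = fst w ! ((i + t) mod a)"
    "\<And>k. k < b \<Longrightarrow> snd w' ! k = snd w ! ((k + t) mod b)"
proof
  let ?w' = "(z2z4_sigma ^^ (b - t)) w"
  show "?w' \<in> D" using dual_funpow_sigma[OF w] .
  have len: "length (fst w) = a" "length (snd w) = b" using dual_nth_range(3,4)[OF w] .
  fix i assume i: "i < a"
  have "((i + t) mod a + (b - t)) mod a = (i + t + (b - t)) mod a" by (simp add: mod_add_left_eq)
  also have "i + t + (b - t) = i + b" using t by simp
  also have "(i + b) mod a = i" using i block_length by (auto elim!: dvdE)
  finally show "fst ?w' ! i = fst w ! ((i + t) mod a)"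
    using funpow_rshift_nth[of "(i + t) mod a" "fst w" "b - t"] len i by (simp add: funpow_z2z4_sigma)
next
  have len: "length (fst w) = a" "length (snd w) = b" using dual_nth_range(3,4)[OF w] .
  fix k assume k: "k < b"
  have "((k + t) mod b + (b - t)) mod b = (k + t + (b - t)) mod b" by (simp add: mod_add_left_eq)
  also have "k + t + (b - t) = k + b" using t by simp
  also have "(k + b) mod b = k" using k by simp
  finally show "snd ((z2z4_sigma ^^ (b - t)) w) ! k = snd w ! ((k + t) mod b)"
    using funpow_rshift_nth[of "(k + t) mod b" "snd w" "b - t"] len k by (simp add: funpow_z2z4_sigma)
qed

lemma quaternary_parity_coordinate_shift:
  assumes "j + a < b" "f < a" "\<forall>w\<in>D. snd w ! j mod 2 = fst w ! f"
  shows "\<forall>w\<in>D. snd w ! (j + a) mod 2 = fst w ! f"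
proof
  fix w assume w: "w \<in> D"
  obtain w' where w': "w' \<in> D" "\<And>i. i < a \<Longrightarrow> fst w' ! i = fst w ! ((i + a) mod a)"
    "\<And>k. k < b \<Longrightarrow> snd w' ! k = snd w ! ((k + a) mod b)"
    using dual_rotate[OF w binary_le_quaternary] by blast
  have "fst w' ! f = fst w ! f" "snd w' ! j = snd w ! (j + a)" using w'(2,3) assms(1,2) by simp_all
  then show "snd w ! (j + a) mod 2 = fst w ! f" using assms(3) w'(1) by metis
qed

lemma quaternary_pair_coordinate:
  assumes "j + a < b"
  obtains g where "g < a" "\<forall>w\<in>D. (2 * fst w ! g + 3 * snd w ! j + 3 * snd w ! (j + a)) mod 4 = 0"
proof -
  define J where "J = j + a"
  have j: "j < b" "J < b" "j \<noteq> J" using assms binary_pos by (auto simp: J_def)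
  obtain f where f: "f < a" "\<forall>w\<in>D. snd w ! j mod 2 = fst w ! f"
    using quaternary_parity_coordinate[OF j(1)] .
  have same_parity: "snd w ! j mod 2 = snd w ! J mod 2" if "w \<in> D" for w
    using f quaternary_parity_coordinate_shift[OF assms f] that by (simp add: J_def)
  obtain c s where c: "c \<in> C" "s < a + 2 * b" "s \<noteq> a + 2 * j" "s \<noteq> a + 2 * J"
    and S: "gray_support c = {a + 2 * j, a + 2 * J, s}"
    using code_gray_triple[of "a + 2 * j" "a + 2 * J"] j by auto
  have s: "s < a" using pair_triple_third_binary[OF j same_parity c S] .
  have "(2 * fst w ! s + 3 * snd w ! j + 3 * snd w ! J) mod 4 = 0" if w: "w \<in> D" for w
  proof -
    have "(2 * fst w ! s + (snd w ! j * 3 + snd w ! J * 3)) mod 4 = 0"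
      using code_relation[OF c(1) w S] s j by (simp add: gray_decode_def)
    then show ?thesis by (simp add: algebra_simps)
  qed
  then show thesis using that s unfolding J_def by blast
qed

lemma rotation_mismatch_weight:
  assumes w: "w \<in> D" and f: "f < a" and g: "g < a"
  obtains w' where "w' \<in> D" "card (binary_support a w')
    = 2 * card {l. l < a \<and> fst w ! ((f + l) mod a) = 0 \<and> fst w ! ((g + l) mod a) = 1}"
proof -
  define d where "d = (g + (a - f)) mod a"
  have d: "d < a" using binary_pos by (simp add: d_def)
  then have "d \<le> b" using binary_le_quaternary by linarith
  obtain w2 where w2: "w2 \<in> D" "\<And>i. i < a \<Longrightarrow> fst w2 ! i = fst w ! ((i + d) mod a)"
    using dual_rotate[OF w \<open>d \<le> b\<close>] by blast
  let ?A = "binary_support a w" and ?B = "binary_support a w2"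
  have rotate_d: "((l + f) mod a + d) mod a = (g + l) mod a" for l
  proof -
    have "((l + f) mod a + d) mod a = (l + f + (g + (a - f))) mod a" by (simp add: d_def mod_add_eq)
    also have "l + f + (g + (a - f)) = (g + l) + a" using f by simp
    finally show ?thesis by simp
  qed
  have "{l. l < a \<and> fst w ! ((f + l) mod a) = 0 \<and> fst w ! ((g + l) mod a) = 1}
      = {l. l < a \<and> fst w ! ((l + f) mod a) = 0 \<and> fst w2 ! ((l + f) mod a) = 1}"
    using w2(2) rotate_d binary_pos by (auto simp: add.commute)
  also have "card \<dots> = card {i. i < a \<and> fst w ! i = 0 \<and> fst w2 ! i = 1}"
    by (rule card_Collect_rotate[OF f])
  also have "{i. i < a \<and> fst w ! i = 0 \<and> fst w2 ! i = 1} = ?B - ?A"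
    using dual_nth_range(1)[OF w] by (force simp: binary_support_def)
  finally have card_diff: "card {l. l < a \<and> fst w ! ((f + l) mod a) = 0 \<and> fst w ! ((g + l) mod a) = 1}
      = card (?B - ?A)" .
  have "card ?B = card {i. i < a \<and> fst w ! ((i + d) mod a) = 1}"
    using w2(2) by (simp add: binary_support_def conj_commute cong: conj_cong)
  also have "\<dots> = card ?A" unfolding binary_support_def by (rule card_Collect_rotate[OF d])
  finally have "card (sym_diff ?A ?B) = 2 * card (?B - ?A)"
    using card_sym_diff[OF finite_binary_support finite_binary_support] by simp
  moreover have "binary_support a (z2z4_add w w2) = sym_diff ?A ?B"
    using binary_support_z2z4_add w w2(1) dual_subset_space by blast
  moreover have "z2z4_add w w2 \<in> D" using dual_additive w w2(1) by (simp add: z2z4_additive_def)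
  ultimately show thesis using that card_diff by simp
qed

lemma even_card_rotation_mismatch:
  assumes a8: "8 dvd a + 1" and w: "w \<in> D" and f: "f < a" and g: "g < a"
  shows "even (card {l. l < a \<and> fst w ! ((f + l) mod a) = 0 \<and> fst w ! ((g + l) mod a) = 1})"
    (is "even (card ?Z)")
proof (cases "card ?Z = 0")
  case False
  obtain w' where w': "w' \<in> D" "card (binary_support a w') = 2 * card ?Z"
    using rotation_mismatch_weight[OF w f g] .
  then have "binary_support a w' \<noteq> {}" using False by auto
  then have "4 * card ?Z = a + 1" using dual_binary_weight[OF w'(1)] w'(2) by simp
  then obtain k where "4 * card ?Z = 8 * k" using a8 by (auto elim!: dvdE)
  then show ?thesis by presburger
next
  case True
  then show ?thesis by (simp only: dvd_0_right)
qed

lemma rotated_block_relations: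
  assumes w: "w \<in> D" and l: "l < a" and j: "j + a + a \<le> b"
    and f: "f < a" "\<forall>w\<in>D. snd w ! j mod 2 = fst w ! f"
    and g: "g < a" "\<forall>w\<in>D. (2 * fst w ! g + 3 * snd w ! j + 3 * snd w ! (j + a)) mod 4 = 0"
  shows "snd w ! (j + l) mod 2 = fst w ! ((f + l) mod a)"
    and "snd w ! (j + a + l) mod 2 = fst w ! ((f + l) mod a)"
    and "(2 * fst w ! ((g + l) mod a) + 3 * snd w ! (j + l) + 3 * snd w ! (j + a + l)) mod 4 = 0"
proof -
  have "l \<le> b" "a + l \<le> b" using l j by linarith+
  obtain w1 where w1: "w1 \<in> D" "\<And>i. i < a \<Longrightarrow> fst w1 ! i = fst w ! ((i + l) mod a)"
    "\<And>k. k < b \<Longrightarrow> snd w1 ! k = snd w ! ((k + l) mod b)"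
    using dual_rotate[OF w \<open>l \<le> b\<close>] by blast
  obtain w2 where w2: "w2 \<in> D" "\<And>i. i < a \<Longrightarrow> fst w2 ! i = fst w ! ((i + (a + l)) mod a)"
    "\<And>k. k < b \<Longrightarrow> snd w2 ! k = snd w ! ((k + (a + l)) mod b)"
    using dual_rotate[OF w \<open>a + l \<le> b\<close>] by blast
  have idx: "j + l < b" "j + a + l < b" "j + a < b" using l j by linarith+
  have w1_vals: "fst w1 ! f = fst w ! ((f + l) mod a)" "fst w1 ! g = fst w ! ((g + l) mod a)"
    "snd w1 ! j = snd w ! (j + l)" "snd w1 ! (j + a) = snd w ! (j + a + l)"
    using w1(2,3) f(1) g(1) idx by (simp_all add: add.commute add.left_commute)
  have "(f + (a + l)) mod a = (f + l) mod a" by (simp add: add.left_commute)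
  then have w2_vals: "fst w2 ! f = fst w ! ((f + l) mod a)" "snd w2 ! j = snd w ! (j + a + l)"
    using w2(2,3) f(1) idx by (simp_all add: add.assoc)
  show "snd w ! (j + l) mod 2 = fst w ! ((f + l) mod a)" using f(2) w1(1) w1_vals by metis
  show "snd w ! (j + a + l) mod 2 = fst w ! ((f + l) mod a)" using f(2) w2(1) w2_vals by metis
  show "(2 * fst w ! ((g + l) mod a) + 3 * snd w ! (j + l) + 3 * snd w ! (j + a + l)) mod 4 = 0"
    using g(2) w1(1) w1_vals by metis
qed

lemma eta_parity_step:
  assumes a8: "8 dvd a + 1" and w: "w \<in> D" and k: "(k + 2) * a \<le> b"
  shows "even (eta a w k) \<longleftrightarrow> even (eta a w (Suc k))"
proof -
  let ?j = "k * a"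
  have j: "?j + a + a \<le> b" using k by (simp add: algebra_simps)
  then have "?j < b" "?j + a < b" using binary_pos by linarith+
  obtain f where f: "f < a" "\<forall>w\<in>D. snd w ! ?j mod 2 = fst w ! f"
    using quaternary_parity_coordinate[OF \<open>?j < b\<close>] .
  obtain g where g: "g < a" "\<forall>w\<in>D. (2 * fst w ! g + 3 * snd w ! ?j + 3 * snd w ! (?j + a)) mod 4 = 0"
    using quaternary_pair_coordinate[OF \<open>?j + a < b\<close>] .
  let ?P = "\<lambda>l. fst w ! ((f + l) mod a)" and ?Q = "\<lambda>l. fst w ! ((g + l) mod a)"
  let ?Y = "\<lambda>l. snd w ! (?j + l)" and ?Y' = "\<lambda>l. snd w ! (?j + a + l)"
  have pointwise: "even (of_bool (?Y l = 2) + of_bool (?Y' l = 2) + of_bool (?P l = 0 \<and> ?Q l = 1) :: nat)"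
    if l: "l < a" for l
  proof (rule block_pointwise_parity)
    have "(f + l) mod a < a" "(g + l) mod a < a" "?j + l < b" "?j + a + l < b"
      using binary_pos l j by auto
    then show "?P l \<in> {0, 1}" "?Q l \<in> {0, 1}" "?Y l \<in> {0, 1, 2, 3}" "?Y' l \<in> {0, 1, 2, 3}"
      using dual_nth_range(1,2)[OF w] by blast+
    show "?Y l mod 2 = ?P l" "?Y' l mod 2 = ?P l" "(2 * ?Q l + 3 * ?Y l + 3 * ?Y' l) mod 4 = 0"
      using rotated_block_relations[OF w l j f g] by simp_all
  qed
  have "eta a w k + eta a w (Suc k) + card {l. l < a \<and> ?P l = 0 \<and> ?Q l = 1}
      = (\<Sum>l<a. of_bool (?Y l = 2) + of_bool (?Y' l = 2) + of_bool (?P l = 0 \<and> ?Q l = 1))"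
    by (simp add: eta_def card_Collect_lessThan_eq_sum sum.distrib add.assoc add.left_commute)
  also have "even \<dots>" using pointwise by (intro dvd_sum) auto
  finally show ?thesis
    using even_card_rotation_mismatch[OF a8 w f(1) g(1)] by simp
qed

lemma eta_parity_eq:
  assumes a8: "8 dvd a + 1" and w: "w \<in> D" and k: "Suc k * a \<le> b"
  shows "even (eta a w k) \<longleftrightarrow> even (eta a w 0)"
  using k
proof (induction k)
  case (Suc k)
  then show ?case using eta_parity_step[OF a8 w, of k] by (simp add: algebra_simps)
qed simp

end

theorem corollary3p9:
  fixes r :: nat and C :: "z2z4vec set" and z :: z2z4vec
  assumes "r > 2"
    and "z2z4_additive (2^r - 1) (2^(r-1) * (2^r - 1)) C"
    and "z2z4_perfect1 (2^r - 1) (2^(r-1) * (2^r - 1)) C"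
    and "z2z4_cyclic (z2z4_dual (2^r - 1) (2^(r-1) * (2^r - 1)) C)"
    and "z \<in> z2z4_dual (2^r - 1) (2^(r-1) * (2^r - 1)) C"
    and "z2z4_order4 (2^r - 1) (2^(r-1) * (2^r - 1)) z"
  shows "\<forall>k < 2^(r-1). \<forall>k' < 2^(r-1).
           even (eta (2^r - 1) z k) \<longleftrightarrow> even (eta (2^r - 1) z k')"
proof -
  let ?a = "2^r - 1 :: nat" and ?K = "2^(r-1) :: nat"
  have "(2::nat)^3 dvd 2^r" using assms(1) by (intro le_imp_power_dvd) simp
  then have a8: "8 dvd ?a + 1" by simp
  then have a_pos: "0 < ?a" by (intro Nat.gr0I) simp
  interpret z2z4_cyclic_perfect_code ?a "?K * ?a" C
  proof
    show "perfect1 (?a + 2 * (?K * ?a)) (Gray ` C)" using assms(3) by (simp add: z2z4_perfect1_def)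
    show "0 < ?K * ?a" using a_pos by simp
  qed (use assms(2,4) in simp_all)
  have "even (eta ?a z k) \<longleftrightarrow> even (eta ?a z 0)" if "k < ?K" for k
  proof (rule eta_parity_eq[OF a8 assms(5)])
    show "Suc k * ?a \<le> ?K * ?a" using that by (intro mult_le_mono1) simp
  qed
  then show ?thesis by blast
qed

end
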